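(* Let $e_X:P\to X$ be a meet-extension with $X$ a complete lattice, let $Q$ be a complete lattice, and let $f:P\to Q$ be an order-preserving map. Then $f$ is an $X$-morphism if and only if $f$ is $e_X$-continuous.
   Context: For $q$ in a poset, $q^\uparrow=\{q'\ge q\}$; for $S\subseteq P$, $S^\uparrow=\{p\in P:p\ge s\text{ for some }s\in S\}$; $e^{-1}(Z)=\{p:e(p)\in Z\}$. A meet-extension is an order-embedding $e:P\to X$ with $x=\bigwedge e[e^{-1}(x^\uparrow)]$ for all $x\in X$. An order-preserving $f:P\to Q$ is an $X$-morphism if for every $q\in Q$ there is $x\in X$ with $f^{-1}(q^\uparrow)=e_X^{-1}(x^\uparrow)$. For a cardinal $\alpha$, $f$ is $(\alpha,e_X)$-continuous if for all $q\in Q$ and all $S\subseteq f^{-1}(q^\uparrow)$ with $|S|<\alpha$ there are $q_S\in Q$ and $x_S\in X$ with (1) $\bigwedge f[S]=q_S=\bigwedge f[e_X^{-1}(x_S^\uparrow)]$ (both meets existing in $Q$) and (2) $S^\uparrow\subseteq e_X^{-1}(x_S^\uparrow)$. $f$ is $e_X$-continuous if it is $(\alpha,e_X)$-continuous for every cardinal $\alpha$. *)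

theory Defs
  imports Main
begin

definition up :: "'a::order \<Rightarrow> 'a set" where
  "up q = {q'. q \<le> q'}"

definition up_set :: "'a::order set \<Rightarrow> 'a set" where
  "up_set S = {p. \<exists>s\<in>S. s \<le> p}"

definition order_embedding :: "('p::order \<Rightarrow> 'x::order) \<Rightarrow> bool" where
  "order_embedding e \<longleftrightarrow> (\<forall>p p'. e p \<le> e p' \<longleftrightarrow> p \<le> p')"

definition meet_extension :: "('p::order \<Rightarrow> 'x::complete_lattice) \<Rightarrow> bool" where
  "meet_extension e \<longleftrightarrow> order_embedding e \<and>
     (\<forall>x. x = Inf (e ` (e -` up x)))"

definition X_morphism :: "('p::order \<Rightarrow> 'x::order) \<Rightarrow> ('p \<Rightarrow> 'q::order) \<Rightarrow> bool" where
  "X_morphism e f \<longleftrightarrow> (\<forall>q. \<exists>x. f -` up q = e -` up x)"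

text \<open>(alpha,e)-continuity, for a cardinal alpha given as a cardinal order relation r.
  Q is a complete lattice, so all meets exist.\<close>
definition alpha_continuous ::
  "'c rel \<Rightarrow> ('p::order \<Rightarrow> 'x::order) \<Rightarrow> ('p \<Rightarrow> 'q::complete_lattice) \<Rightarrow> bool" where
  "alpha_continuous r e f \<longleftrightarrow>
     (\<forall>q. \<forall>S. S \<subseteq> f -` up q \<and> ordLess2 (card_of S) r \<longrightarrow>
        (\<exists>qS xS. Inf (f ` S) = qS \<and> qS = Inf (f ` (e -` up xS))
                 \<and> up_set S \<subseteq> e -` up xS))"

text \<open>Cardinals are taken
  on the carrier 'p set; these include cardinals exceeding |P|, so every subset of P
  is covered (cardinals above that give no new conditions).\<close>
definition e_continuous :: "('p::order \<Rightarrow> 'x::order) \<Rightarrow> ('p \<Rightarrow> 'q::complete_lattice) \<Rightarrow> bool" where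
  "e_continuous e f \<longleftrightarrow> (\<forall>r :: 'p set rel. Card_order r \<longrightarrow> alpha_continuous r e f)"

end

theory Submission
  imports Defs
begin

text \<open>Forward: for \<open>S \<subseteq> P\<close> put \<open>q\<^sub>S = \<Sqinter>f[S]\<close>; the X-morphism property writes
  \<open>f\<^sup>-\<^sup>1(q\<^sub>S\<^sup>\<up>)\<close> as some \<open>e\<^sup>-\<^sup>1(x\<^sup>\<up>)\<close>, which contains \<open>S\<^sup>\<up>\<close> by monotonicity and has the same
  meet under \<open>f\<close> as \<open>S\<close>. Backward: continuity for the cardinal \<open>|Pow P|\<close> at the set \<open>S = f\<^sup>-\<^sup>1(q\<^sup>\<up>)\<close>
  gives \<open>x\<close> with \<open>S \<subseteq> e\<^sup>-\<^sup>1(x\<^sup>\<up>)\<close> and \<open>q \<le> \<Sqinter>f[S] = \<Sqinter>f[e\<^sup>-\<^sup>1(x\<^sup>\<up>)]\<close>, which forces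
  \<open>S = e\<^sup>-\<^sup>1(x\<^sup>\<up>)\<close>. Neither direction uses that \<open>e\<close> is a meet-extension.\<close>

lemma Inf_image_vimage_up_Inf:
  fixes f :: "'p \<Rightarrow> 'q::complete_lattice"
  shows "Inf (f ` (f -` up (Inf (f ` S)))) = Inf (f ` S)"
proof (rule antisym)
  have "S \<subseteq> f -` up (Inf (f ` S))"
    by (auto simp: up_def Inf_lower)
  then show "Inf (f ` (f -` up (Inf (f ` S)))) \<le> Inf (f ` S)"
    by (intro Inf_superset_mono) auto
  show "Inf (f ` S) \<le> Inf (f ` (f -` up (Inf (f ` S))))"
    by (auto intro!: Inf_greatest simp: up_def)
qed

lemma up_set_subset_vimage_up_Inf:
  fixes f :: "'p::order \<Rightarrow> 'q::complete_lattice"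
  assumes "mono f"
  shows "up_set S \<subseteq> f -` up (Inf (f ` S))"
proof
  fix p assume "p \<in> up_set S"
  then obtain s where "s \<in> S" "s \<le> p"
    by (auto simp: up_set_def)
  then have "Inf (f ` S) \<le> f p"
    using assms by (meson Inf_lower image_eqI monoD order_trans)
  then show "p \<in> f -` up (Inf (f ` S))"
    by (simp add: up_def)
qed

lemma X_morphism_imp_alpha_continuous:
  fixes e :: "'p::order \<Rightarrow> 'x::order" and f :: "'p \<Rightarrow> 'q::complete_lattice"
  assumes "mono f" and "X_morphism e f"
  shows "alpha_continuous r e f"
  unfolding alpha_continuous_def
proof (intro allI impI)
  fix S :: "'p set"
  obtain x where x: "f -` up (Inf (f ` S)) = e -` up x"
    using assms(2) unfolding X_morphism_def by blast
  have "Inf (f ` S) = Inf (f ` (e -` up x))"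
    using Inf_image_vimage_up_Inf[of f S] by (simp add: x)
  moreover have "up_set S \<subseteq> e -` up x"
    using up_set_subset_vimage_up_Inf[OF assms(1)] by (simp add: x[symmetric])
  ultimately show "\<exists>qS xS. Inf (f ` S) = qS \<and> qS = Inf (f ` (e -` up xS))
                     \<and> up_set S \<subseteq> e -` up xS"
    by blast
qed

lemma ordLess2_card_of_Pow_UNIV:
  fixes S :: "'a set"
  shows "ordLess2 (card_of S) (card_of (Pow (UNIV :: 'a set)))"
  using card_of_mono1[of S UNIV] card_of_Pow[of "UNIV :: 'a set"] ordLeq_ordLess_trans
  by blast

lemma vimage_up_eq_if_same_Inf:
  fixes e :: "'p::order \<Rightarrow> 'x::order" and f :: "'p \<Rightarrow> 'q::complete_lattice"
  assumes "up_set (f -` up q) \<subseteq> e -` up x"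
    and "Inf (f ` (f -` up q)) = Inf (f ` (e -` up x))"
  shows "f -` up q = e -` up x"
proof
  show "f -` up q \<subseteq> e -` up x"
    using assms(1) by (auto simp: up_set_def)
  show "e -` up x \<subseteq> f -` up q"
  proof
    fix p assume "p \<in> e -` up x"
    then have "Inf (f ` (e -` up x)) \<le> f p"
      by (simp add: Inf_lower)
    moreover have "q \<le> Inf (f ` (f -` up q))"
      by (auto intro!: Inf_greatest simp: up_def)
    ultimately show "p \<in> f -` up q"
      using assms(2) by (auto simp: up_def)
  qed
qed

lemma alpha_continuous_Pow_UNIV_imp_X_morphism:
  fixes e :: "'p::order \<Rightarrow> 'x::order" and f :: "'p \<Rightarrow> 'q::complete_lattice"
  assumes "alpha_continuous (card_of (Pow (UNIV :: 'p set))) e f"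
  shows "X_morphism e f"
  unfolding X_morphism_def
proof
  fix q
  obtain x where "Inf (f ` (f -` up q)) = Inf (f ` (e -` up x))"
    and "up_set (f -` up q) \<subseteq> e -` up x"
    using assms ordLess2_card_of_Pow_UNIV unfolding alpha_continuous_def by blast
  then show "\<exists>x. f -` up q = e -` up x"
    using vimage_up_eq_if_same_Inf by blast
qed

theorem proposition7p2:
  fixes e :: "'p::order \<Rightarrow> 'x::complete_lattice"
    and f :: "'p \<Rightarrow> 'q::complete_lattice"
  assumes "meet_extension e"
    and "mono f"
  shows "X_morphism e f \<longleftrightarrow> e_continuous e f"
proof
  show "X_morphism e f \<Longrightarrow> e_continuous e f"
    unfolding e_continuous_def using assms(2) X_morphism_imp_alpha_continuous by blast
  show "e_continuous e f \<Longrightarrow> X_morphism e f"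
    unfolding e_continuous_def
    using card_of_Card_order alpha_continuous_Pow_UNIV_imp_X_morphism by blast
qed

end
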